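(* For every Bayesian network $(X_v)_{v\in V}$ on a finite DAG $\mathcal G$ with states $\mathcal A$ and full support, and every surjection $f:\mathcal A\to\mathcal B$, we have (D3) $\Rightarrow$ (D2) $\Rightarrow$ (D1). Moreover, neither implication can be reversed in general: there exist a DAG, a BN with full support and a surjection $f$ for which (D1) holds but (D2) fails, and there exist a DAG, a BN with full support and a surjection $f$ for which (D2) holds but (D3) fails.
   Context: $\mathcal G=(V,E)$ is a finite directed acyclic graph; $pa(v)$ is the set of parents of $v$, $nd(v)$ the set of non-descendants (vertices other than $v$ not reachable from $v$ by a directed path), $V_s=\{v:pa(v)=\emptyset\}$ the source nodes, $V_p=V\setminus V_s$. $\mathcal A,\mathcal B$ are finite sets with $|\mathcal A|>|\mathcal B|$ and $f:\mathcal A\to\mathcal B$ a surjection, applied coordinatewise to tuples. A Bayesian network (BN) on $\mathcal G$ with states $\mathcal A$ is specified by a distribution $\alpha_v$ on $\mathcal A$ for each $v\in V_s$ (the initial distribution) and, for each $v\in V_p$ and $a_{pa(v)}\in\mathcal A^{pa(v)}$, a distribution $P_v(\cdot\mid a_{pa(v)})$ on $\mathcal A$ (the CPDs); the random vector $(X_v)_{v\in V}$ has $\mathbb P(X=x)=\prod_{v\in V_s}\alpha_v(x_v)\prod_{v\in V_p}P_v(x_v\mid x_{pa(v)})$. Full support means every $x\in\mathcal A^V$ has positive probability. For an initial distribution $\tilde\alpha=(\tilde\alpha_v)_{v\in V_s}$, $X[\tilde\alpha]$ is the random vector obtained by replacing $\alpha$ by $\tilde\alpha$ and keeping all CPDs,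 with law $\mathbb P_{\tilde\alpha}$. $U_v=f(X_v)$, $U[\tilde\alpha]=f(X[\tilde\alpha])$. A random vector $(Y_v)_{v\in V}$ with finitely many values factorises over $\mathcal G$ if $\mathbb P(Y=y)=\prod_v q_v(y_v\mid y_{pa(v)})$ for some conditional distributions $q_v$ (equivalently $Y_v$ is conditionally independent of $Y_{nd(v)\setminus pa(v)}$ given $Y_{pa(v)}$ for all $v$). Conditions: (D1) $(U_v)_{v\in V}$ factorises over $\mathcal G$. (D2) for every initial distribution $\tilde\alpha$, $U[\tilde\alpha]$ factorises over $\mathcal G$. (D3) for every $\tilde\alpha$, $U[\tilde\alpha]$ factorises over $\mathcal G$, and for every $v\in V_p$, $b_v\in\mathcal B$, $b_{pa(v)}\in\mathcal B^{pa(v)}$, the value $\mathbb P_{\tilde\alpha}(U_v=b_v\mid U_{pa(v)}=b_{pa(v)})$ is the same for all $\tilde\alpha$ with $\mathbb P_{\tilde\alpha}(U_{pa(v)}=b_{pa(v)})>0$. *)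

theory Defs
  imports Complex_Main "HOL-Library.FuncSet"
begin

definition dag :: "'v set \<Rightarrow> ('v \<Rightarrow> 'v set) \<Rightarrow> bool" where
  "dag V pa \<longleftrightarrow> finite V \<and> (\<forall>v\<in>V. pa v \<subseteq> V)
      \<and> acyclic {(u, v). v \<in> V \<and> u \<in> pa v}"

definition distr_on :: "'s set \<Rightarrow> ('s \<Rightarrow> real) \<Rightarrow> bool" where
  "distr_on S p \<longleftrightarrow> (\<forall>s\<in>S. 0 \<le> p s) \<and> sum p S = 1"

definition init_dist :: "'v set \<Rightarrow> ('v \<Rightarrow> 'v set) \<Rightarrow> 'a set \<Rightarrow> ('v \<Rightarrow> 'a \<Rightarrow> real) \<Rightarrow> bool" where
  "init_dist V pa A \<alpha> \<longleftrightarrow> (\<forall>v\<in>V. pa v = {} \<longrightarrow> distr_on A (\<alpha> v))"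

definition cpds :: "'v set \<Rightarrow> ('v \<Rightarrow> 'v set) \<Rightarrow> 'a set \<Rightarrow> ('v \<Rightarrow> ('v \<Rightarrow> 'a) \<Rightarrow> 'a \<Rightarrow> real) \<Rightarrow> bool" where
  "cpds V pa A P \<longleftrightarrow> (\<forall>v\<in>V. pa v \<noteq> {} \<longrightarrow> (\<forall>xp \<in> pa v \<rightarrow>\<^sub>E A. distr_on A (P v xp)))"

definition is_BN :: "'v set \<Rightarrow> ('v \<Rightarrow> 'v set) \<Rightarrow> 'a set \<Rightarrow> ('v \<Rightarrow> 'a \<Rightarrow> real)
     \<Rightarrow> ('v \<Rightarrow> ('v \<Rightarrow> 'a) \<Rightarrow> 'a \<Rightarrow> real) \<Rightarrow> bool" where
  "is_BN V pa A \<alpha> P \<longleftrightarrow> dag V pa \<and> finite A \<and> init_dist V pa A \<alpha> \<and> cpds V pa A P"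

definition bn_prob :: "'v set \<Rightarrow> ('v \<Rightarrow> 'v set) \<Rightarrow> ('v \<Rightarrow> 'a \<Rightarrow> real)
     \<Rightarrow> ('v \<Rightarrow> ('v \<Rightarrow> 'a) \<Rightarrow> 'a \<Rightarrow> real) \<Rightarrow> ('v \<Rightarrow> 'a) \<Rightarrow> real" where
  "bn_prob V pa \<alpha> P x =
     (\<Prod>v\<in>V. if pa v = {} then \<alpha> v (x v) else P v (restrict x (pa v)) (x v))"

definition full_support :: "'v set \<Rightarrow> ('v \<Rightarrow> 'v set) \<Rightarrow> 'a set \<Rightarrow> ('v \<Rightarrow> 'a \<Rightarrow> real)
     \<Rightarrow> ('v \<Rightarrow> ('v \<Rightarrow> 'a) \<Rightarrow> 'a \<Rightarrow> real) \<Rightarrow> bool" where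
  "full_support V pa A \<alpha> P \<longleftrightarrow> (\<forall>x \<in> V \<rightarrow>\<^sub>E A. 0 < bn_prob V pa \<alpha> P x)"

text \<open>Probability that U_w = c w for all w in W, where U = f(X).\<close>
definition uprob :: "'v set \<Rightarrow> ('v \<Rightarrow> 'v set) \<Rightarrow> 'a set \<Rightarrow> ('a \<Rightarrow> 'b) \<Rightarrow> ('v \<Rightarrow> 'a \<Rightarrow> real)
     \<Rightarrow> ('v \<Rightarrow> ('v \<Rightarrow> 'a) \<Rightarrow> 'a \<Rightarrow> real) \<Rightarrow> 'v set \<Rightarrow> ('v \<Rightarrow> 'b) \<Rightarrow> real" where
  "uprob V pa A f \<alpha> P W c =
     (\<Sum>x \<in> {x \<in> V \<rightarrow>\<^sub>E A. \<forall>w\<in>W. f (x w) = c w}. bn_prob V pa \<alpha> P x)"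

definition ulaw :: "'v set \<Rightarrow> ('v \<Rightarrow> 'v set) \<Rightarrow> 'a set \<Rightarrow> ('a \<Rightarrow> 'b) \<Rightarrow> ('v \<Rightarrow> 'a \<Rightarrow> real)
     \<Rightarrow> ('v \<Rightarrow> ('v \<Rightarrow> 'a) \<Rightarrow> 'a \<Rightarrow> real) \<Rightarrow> ('v \<Rightarrow> 'b) \<Rightarrow> real" where
  "ulaw V pa A f \<alpha> P u = uprob V pa A f \<alpha> P V u"

definition factorises :: "'v set \<Rightarrow> ('v \<Rightarrow> 'v set) \<Rightarrow> 's set \<Rightarrow> (('v \<Rightarrow> 's) \<Rightarrow> real) \<Rightarrow> bool" where
  "factorises V pa S Q \<longleftrightarrow>
     (\<exists>q :: 'v \<Rightarrow> ('v \<Rightarrow> 's) \<Rightarrow> 's \<Rightarrow> real.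
        (\<forall>v\<in>V. \<forall>yp \<in> pa v \<rightarrow>\<^sub>E S. distr_on S (q v yp)) \<and>
        (\<forall>y \<in> V \<rightarrow>\<^sub>E S. Q y = (\<Prod>v\<in>V. q v (restrict y (pa v)) (y v))))"

definition D1 where
  "D1 V pa A B f \<alpha> P \<longleftrightarrow> factorises V pa B (ulaw V pa A f \<alpha> P)"

definition D2 where
  "D2 V pa A B f P \<longleftrightarrow>
     (\<forall>\<alpha>'. init_dist V pa A \<alpha>' \<longrightarrow> factorises V pa B (ulaw V pa A f \<alpha>' P))"

definition D3 where
  "D3 V pa A B f P \<longleftrightarrow> D2 V pa A B f P \<and>
     (\<forall>v\<in>V. pa v \<noteq> {} \<longrightarrow> (\<forall>b\<in>B. \<forall>c \<in> pa v \<rightarrow>\<^sub>E B. \<forall>\<alpha>1 \<alpha>2.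
        init_dist V pa A \<alpha>1 \<longrightarrow> init_dist V pa A \<alpha>2 \<longrightarrow>
        0 < uprob V pa A f \<alpha>1 P (pa v) c \<longrightarrow> 0 < uprob V pa A f \<alpha>2 P (pa v) c \<longrightarrow>
        uprob V pa A f \<alpha>1 P (insert v (pa v)) (c(v := b)) / uprob V pa A f \<alpha>1 P (pa v) c
        = uprob V pa A f \<alpha>2 P (insert v (pa v)) (c(v := b)) / uprob V pa A f \<alpha>2 P (pa v) c))"

definition setting where
  "setting V pa A B f \<alpha> P \<longleftrightarrow> is_BN V pa A \<alpha> P \<and> full_support V pa A \<alpha> P
     \<and> finite B \<and> card B < card A \<and> f ` A = B"

end

theory Submission
  imports Defs
begin

text \<open>
  D3 contains D2, and the given initial distribution is among those quantified over in D2,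
  so D3 \<Longrightarrow> D2 \<Longrightarrow> D1. For the converses, lump the states of A = {0, 1, 2} by f = [2 \<mapsto> 1, else 0].
  On a single edge 0 \<rightarrow> 1 every law factorises, so D2 holds whatever the kernel; but if the kernel
  treats the merged states 0 and 1 differently, P(U_1 | U_0 = 0) depends on how the initial
  distribution splits the mass of U_0 = 0 between them, so D3 fails. On the chain 0 \<rightarrow> 1 \<rightarrow> 2 the
  kernels can be tuned so that U is Markov for the uniform initial distribution, while for the
  initial distribution (1/2, 0, 1/2) the variables U_0 and U_2 become dependent given U_1.
\<close>

lemma dag_if_parents_less:
  fixes V :: "'v :: order set"
  assumes "finite V" "\<forall>v\<in>V. pa v \<subseteq> V" "\<forall>v\<in>V. \<forall>u\<in>pa v. u < v"
  shows "dag V pa"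
proof -
  have "acyclic ({(u, v). v \<in> V \<and> u \<in> pa v}\<inverse>)"
    by (rule acyclicI_order[where f = id]) (use assms(3) in auto)
  with assms(1,2) show ?thesis
    unfolding dag_def by simp
qed

lemma D3_conditional_eq:
  assumes "D3 V pa A B f P" "v \<in> V" "pa v \<noteq> {}" "b \<in> B" "c \<in> pa v \<rightarrow>\<^sub>E B"
    and "init_dist V pa A \<alpha>1" "init_dist V pa A \<alpha>2"
    and "0 < uprob V pa A f \<alpha>1 P (pa v) c" "0 < uprob V pa A f \<alpha>2 P (pa v) c"
  shows "uprob V pa A f \<alpha>1 P (insert v (pa v)) (c(v := b)) / uprob V pa A f \<alpha>1 P (pa v) c
       = uprob V pa A f \<alpha>2 P (insert v (pa v)) (c(v := b)) / uprob V pa A f \<alpha>2 P (pa v) c"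
  using assms unfolding D3_def by blast

definition tuple2 :: "'a \<Rightarrow> 'a \<Rightarrow> nat \<Rightarrow> 'a" where
  "tuple2 a b = (\<lambda>i. if i = 0 then a else if i = 1 then b else undefined)"

definition tuple3 :: "'a \<Rightarrow> 'a \<Rightarrow> 'a \<Rightarrow> nat \<Rightarrow> 'a" where
  "tuple3 a b d = (\<lambda>i. if i = 0 then a else if i = 1 then b else if i = 2 then d else undefined)"

lemma tuple2_simps [simp]: "tuple2 a b 0 = a" "tuple2 a b (Suc 0) = b"
  by (simp_all add: tuple2_def)

lemma tuple3_simps [simp]: "tuple3 a b d 0 = a" "tuple3 a b d (Suc 0) = b" "tuple3 a b d 2 = d"
  by (simp_all add: tuple3_def)

lemma bij_betw_tuple2: "bij_betw (\<lambda>(a, b). tuple2 a b) (S 0 \<times> S 1) (PiE {0, 1} S)"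
  by (rule bij_betwI[where g = "\<lambda>x. (x 0, x 1)"]) (auto simp: tuple2_def PiE_def extensional_def)

lemma bij_betw_tuple3:
  "bij_betw (\<lambda>(a, b, d). tuple3 a b d) (S 0 \<times> S 1 \<times> S 2) (PiE {0, 1, 2} S)"
  by (rule bij_betwI[where g = "\<lambda>x. (x 0, x 1, x 2)"]) (auto simp: tuple3_def PiE_def extensional_def)

lemma sum_PiE_tuple2: "(\<Sum>x\<in>PiE {0, 1} S. F x) = (\<Sum>a\<in>S 0. \<Sum>b\<in>S 1. F (tuple2 a b))"
proof -
  have "(\<Sum>x\<in>PiE {0, 1} S. F x) = (\<Sum>(a, b)\<in>S 0 \<times> S 1. F (tuple2 a b))"
    using sum.reindex_bij_betw[OF bij_betw_tuple2, of F] by (simp add: split_def)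
  then show ?thesis by (simp add: sum.cartesian_product)
qed

lemma sum_PiE_tuple3:
  "(\<Sum>x\<in>PiE {0, 1, 2} S. F x) = (\<Sum>a\<in>S 0. \<Sum>b\<in>S 1. \<Sum>d\<in>S 2. F (tuple3 a b d))"
proof -
  have "(\<Sum>x\<in>PiE {0, 1, 2} S. F x) = (\<Sum>(a, b, d)\<in>S 0 \<times> S 1 \<times> S 2. F (tuple3 a b d))"
    using sum.reindex_bij_betw[OF bij_betw_tuple3, of F] by (simp add: split_def)
  then show ?thesis by (simp add: sum.cartesian_product split_def)
qed

lemma PiE_tuple2_eq: "y \<in> {0, 1} \<rightarrow>\<^sub>E S \<Longrightarrow> y = tuple2 (y 0) (y 1)"
  by (auto simp: tuple2_def PiE_def extensional_def)

lemma tuple2_in_PiE: "a \<in> S \<Longrightarrow> b \<in> S \<Longrightarrow> tuple2 a b \<in> {0, 1} \<rightarrow>\<^sub>E S"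
  by (auto simp: tuple2_def split: if_splits)

lemma tuple3_in_PiE: "a \<in> S \<Longrightarrow> b \<in> S \<Longrightarrow> d \<in> S \<Longrightarrow> tuple3 a b d \<in> {0, 1, 2} \<rightarrow>\<^sub>E S"
  by (auto simp: tuple3_def split: if_splits)

lemma uprob_PiE:
  "W \<subseteq> V \<Longrightarrow> uprob V pa A f \<alpha> P W c =
     (\<Sum>x\<in>PiE V (\<lambda>w. if w \<in> W then {a \<in> A. f a = c w} else A). bn_prob V pa \<alpha> P x)"
  unfolding uprob_def by (rule sum.cong) (auto simp: PiE_def Pi_def split: if_splits)

lemma if_then_sum_else_0: "(if P then sum g A else 0) = (\<Sum>x\<in>A. if P then g x else 0)"
  by simp

lemma uprob_tuple2:
  assumes "W \<subseteq> {0, 1}" "finite A"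
  shows "uprob {0, 1} pa A f \<alpha> P W c =
    (\<Sum>a\<in>A. \<Sum>b\<in>A. if (0 \<in> W \<longrightarrow> f a = c 0) \<and> (1 \<in> W \<longrightarrow> f b = c 1)
                     then bn_prob {0, 1} pa \<alpha> P (tuple2 a b) else 0)"
  unfolding uprob_PiE[OF assms(1)] sum_PiE_tuple2
  using assms(2) by (auto simp: sum.inter_filter if_then_sum_else_0 intro!: sum.cong)

lemma ulaw_tuple3:
  assumes "finite A"
  shows "ulaw {0, 1, 2} pa A f \<alpha> P c =
    (\<Sum>a\<in>A. \<Sum>b\<in>A. \<Sum>d\<in>A. if f a = c 0 \<and> f b = c 1 \<and> f d = c 2
                             then bn_prob {0, 1, 2} pa \<alpha> P (tuple3 a b d) else 0)"
  unfolding ulaw_def uprob_PiE[OF order_refl] sum_PiE_tuple3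
  using assms by (auto simp: sum.inter_filter if_then_sum_else_0 intro!: sum.cong)

definition pa_edge :: "nat \<Rightarrow> nat set" where
  "pa_edge v = (if v = 1 then {0} else {})"

lemma pa_edge_1: "pa_edge 1 = {0}"
  by (simp add: pa_edge_def)

lemma factorises_edge:
  assumes "finite S" "s \<in> S" "distr_on (PiE {0, 1} (\<lambda>_. S)) Q"
  shows "factorises {0, 1} pa_edge S Q"
proof -
  have Q_nonneg: "0 \<le> Q (tuple2 a b)" if "a \<in> S" "b \<in> S" for a b
    using assms(3) tuple2_in_PiE[OF that] unfolding distr_on_def by blast
  define m where "m a = (\<Sum>b\<in>S. Q (tuple2 a b))" for a
  have m_sum: "sum m S = 1"
    using assms(3) unfolding distr_on_def sum_PiE_tuple2 by (simp add: m_def)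
  have Q_zero: "Q (tuple2 a b) = 0" if "m a = 0" "a \<in> S" "b \<in> S" for a b
    using that Q_nonneg assms(1) unfolding m_def by (auto simp: sum_nonneg_eq_0_iff)
  \<comment> \<open>Where the marginal m of the parent vanishes, any law of the child will do.\<close>
  define q where "q v yp b = (if v = 0 then m b
      else if m (yp 0) = 0 then (if b = s then 1 else 0)
      else Q (tuple2 (yp 0) b) / m (yp 0))" for v :: nat and yp :: "nat \<Rightarrow> 'a" and b
  show ?thesis
    unfolding factorises_def
  proof (intro exI[of _ q] conjI ballI)
    fix v yp
    assume "v \<in> {0 :: nat, 1}" "yp \<in> pa_edge v \<rightarrow>\<^sub>E S"
    then consider "v = 0" | "v = 1" "yp 0 \<in> S"
      by (auto simp: pa_edge_def PiE_iff)
    then show "distr_on S (q v yp)"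
    proof cases
      case 1
      then show ?thesis
        using m_sum Q_nonneg by (simp add: distr_on_def q_def m_def sum_nonneg)
    next
      case 2
      have "0 \<le> m (yp 0)"
        using 2 Q_nonneg by (simp add: m_def sum_nonneg)
      show ?thesis
      proof (cases "m (yp 0) = 0")
        case True
        then show ?thesis
          using 2 assms(1,2) by (simp add: distr_on_def q_def)
      next
        case False
        have "(\<Sum>b\<in>S. Q (tuple2 (yp 0) b) / m (yp 0)) = 1"
          using False by (simp add: m_def sum_divide_distrib[symmetric])
        with 2 False \<open>0 \<le> m (yp 0)\<close> Q_nonneg show ?thesis
          by (simp add: distr_on_def q_def)
      qed
    qed
  next
    fix y
    assume y: "y \<in> {0 :: nat, 1} \<rightarrow>\<^sub>E S"
    obtain a b where ab: "a \<in> S" "b \<in> S" and "y = tuple2 a b"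
      using y PiE_tuple2_eq by blast
    then show "Q y = (\<Prod>v\<in>{0, 1}. q v (restrict y (pa_edge v)) (y v))"
      using Q_zero[OF _ ab] by (auto simp: q_def pa_edge_def)
  qed
qed

definition pa_chain :: "nat \<Rightarrow> nat set" where
  "pa_chain v = (if v = 1 then {0} else if v = 2 then {1} else {})"

text \<open>Conditional independence of the two ends of the chain given the middle vertex,
  in a form free of divisions.\<close>
lemma factorises_chain_cross_ratio:
  assumes "factorises {0, 1, 2} pa_chain S Q" "a \<in> S" "a' \<in> S" "b \<in> S" "d \<in> S" "d' \<in> S"
  shows "Q (tuple3 a b d) * Q (tuple3 a' b d') = Q (tuple3 a b d') * Q (tuple3 a' b d)"
proof -
  obtain q where q: "\<forall>y \<in> {0, 1, 2} \<rightarrow>\<^sub>E S. Q y = (\<Prod>v\<in>{0, 1, 2}. q v (restrict y (pa_chain v)) (y v))"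
    using assms(1) unfolding factorises_def by blast
  have "Q (tuple3 x b z) = q 0 (\<lambda>_. undefined) x * q 1 (\<lambda>i. if i = 0 then x else undefined) b
      * q 2 (\<lambda>i. if i = 1 then b else undefined) z" if "x \<in> S" "z \<in> S" for x z
    using q[rule_format, OF tuple3_in_PiE[OF that(1) assms(4) that(2)]]
    by (simp add: pa_chain_def restrict_def tuple3_def cong: if_cong)
  with assms(2-6) show ?thesis by (simp add: mult_ac)
qed

definition merge_states :: "nat \<Rightarrow> nat" where
  "merge_states a = (if a = 2 then 1 else 0)"

definition uniform3 :: "nat \<Rightarrow> nat \<Rightarrow> real" where
  "uniform3 v a = 1 / 3"

definition kernel_edge :: "nat \<Rightarrow> nat \<Rightarrow> real" where
  "kernel_edge x a = (if x = 0 then (if a = 0 then 1/2 else 1/4) else if a = 2 then 3/4 else 1/8)"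

definition cpd_edge :: "nat \<Rightarrow> (nat \<Rightarrow> nat) \<Rightarrow> nat \<Rightarrow> real" where
  "cpd_edge v xp = kernel_edge (xp 0)"

lemma bn_prob_edge: "bn_prob {0, 1} pa_edge \<alpha> cpd_edge (tuple2 a b) = \<alpha> 0 a * kernel_edge a b"
  by (simp add: bn_prob_def pa_edge_def cpd_edge_def)

lemma uprob_edge:
  "W \<subseteq> {0, 1} \<Longrightarrow> uprob {0, 1} pa_edge {0, 1, 2} merge_states \<alpha> cpd_edge W c =
    (\<Sum>a\<in>{0, 1, 2}. \<Sum>b\<in>{0, 1, 2}.
       if (0 \<in> W \<longrightarrow> merge_states a = c 0) \<and> (1 \<in> W \<longrightarrow> merge_states b = c 1)
       then \<alpha> 0 a * kernel_edge a b else 0)"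
  by (simp only: uprob_tuple2 bn_prob_edge finite.emptyI finite_insert)

lemma setting_edge: "setting {0, 1} pa_edge {0, 1, 2} {0, 1} merge_states uniform3 cpd_edge"
  unfolding setting_def is_BN_def
  by (auto intro!: dag_if_parents_less prod_pos
      simp: pa_edge_def init_dist_def cpds_def distr_on_def uniform3_def cpd_edge_def
            kernel_edge_def full_support_def bn_prob_def merge_states_def)

lemma D2_edge: "D2 {0, 1} pa_edge {0, 1, 2} {0, 1} merge_states cpd_edge"
  unfolding D2_def
proof (intro allI impI)
  fix \<alpha> :: "nat \<Rightarrow> nat \<Rightarrow> real"
  assume "init_dist {0, 1} pa_edge {0, 1, 2} \<alpha>"
  then have \<alpha>: "\<alpha> 0 0 \<ge> 0" "\<alpha> 0 1 \<ge> 0" "\<alpha> 0 2 \<ge> 0" "\<alpha> 0 0 + \<alpha> 0 1 + \<alpha> 0 2 = 1"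
    by (auto simp: init_dist_def pa_edge_def distr_on_def)
  let ?U = "ulaw {0, 1} pa_edge {0, 1, 2} merge_states \<alpha> cpd_edge"
  have "distr_on (PiE {0, 1} (\<lambda>_. {0, 1})) ?U"
    unfolding distr_on_def ulaw_def sum_PiE_tuple2 uprob_edge[OF order_refl]
    using \<alpha> by (auto simp: merge_states_def kernel_edge_def intro!: sum_nonneg)
  then show "factorises {0, 1} pa_edge {0, 1} ?U"
    by (intro factorises_edge) auto
qed

lemma not_D3_edge: "\<not> D3 {0, 1} pa_edge {0, 1, 2} {0, 1} merge_states cpd_edge"
proof
  define point :: "nat \<Rightarrow> nat \<Rightarrow> nat \<Rightarrow> real" where "point s v a = (if a = s then 1 else 0)" for s v a
  define c :: "nat \<Rightarrow> nat" where "c = (\<lambda>i. if i = 0 then 0 else undefined)"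
  let ?u = "\<lambda>\<alpha> W c. uprob {0, 1} pa_edge {0, 1, 2} merge_states \<alpha> cpd_edge W c"
  have init: "init_dist {0, 1} pa_edge {0, 1, 2} (point s)" if "s \<in> {0, 1, 2}" for s
    using that by (auto simp: init_dist_def distr_on_def point_def)
  have c: "c \<in> pa_edge 1 \<rightarrow>\<^sub>E {0, 1}"
    by (auto simp: pa_edge_def c_def split: if_splits)
  have parent: "?u (point 0) (pa_edge 1) c = 1" "?u (point 1) (pa_edge 1) c = 1"
    unfolding pa_edge_1
    by (subst uprob_edge; simp add: point_def c_def merge_states_def kernel_edge_def)+
  have child: "?u (point 0) (insert 1 (pa_edge 1)) (c(1 := 0)) = 3/4"
    "?u (point 1) (insert 1 (pa_edge 1)) (c(1 := 0)) = 1/4"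
    unfolding pa_edge_1
    by (subst uprob_edge; simp add: point_def c_def merge_states_def kernel_edge_def)+
  have positive: "0 < ?u (point 0) (pa_edge 1) c" "0 < ?u (point 1) (pa_edge 1) c"
    unfolding parent by simp_all
  assume "D3 {0, 1} pa_edge {0, 1, 2} {0, 1} merge_states cpd_edge"
  then have "?u (point 0) (insert 1 (pa_edge 1)) (c(1 := 0)) / ?u (point 0) (pa_edge 1) c
           = ?u (point 1) (insert 1 (pa_edge 1)) (c(1 := 0)) / ?u (point 1) (pa_edge 1) c"
    by (rule D3_conditional_eq[OF _ _ _ _ c init[of 0] init[of 1] positive]) (simp_all add: pa_edge_def)
  then show False
    unfolding child parent by simp
qed

definition kernel_chain1 :: "nat \<Rightarrow> nat \<Rightarrow> real" where
  "kernel_chain1 x a = (if x = 0 then (if a = 0 then 1/2 else 1/4)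
     else if x = 1 then (if a = 1 then 1/2 else 1/4) else 1/3)"

definition kernel_chain2 :: "nat \<Rightarrow> nat \<Rightarrow> real" where
  "kernel_chain2 x a = (if x = 0 then (if a = 0 then 1/2 else 1/4)
     else if x = 1 then (if a = 2 then 3/4 else 1/8) else 1/3)"

definition cpd_chain :: "nat \<Rightarrow> (nat \<Rightarrow> nat) \<Rightarrow> nat \<Rightarrow> real" where
  "cpd_chain v xp = (if v = 1 then kernel_chain1 (xp 0) else kernel_chain2 (xp 1))"

lemma ulaw_chain:
  "ulaw {0, 1, 2} pa_chain {0, 1, 2} merge_states \<alpha> cpd_chain c =
    (\<Sum>a\<in>{0, 1, 2}. \<Sum>b\<in>{0, 1, 2}. \<Sum>d\<in>{0, 1, 2}.
       if merge_states a = c 0 \<and> merge_states b = c 1 \<and> merge_states d = c 2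
       then \<alpha> 0 a * kernel_chain1 a b * kernel_chain2 b d else 0)"
proof -
  have "bn_prob {0, 1, 2} pa_chain \<alpha> cpd_chain (tuple3 a b d) = \<alpha> 0 a * kernel_chain1 a b * kernel_chain2 b d"
    for a b d
    by (simp add: bn_prob_def pa_chain_def cpd_chain_def)
  then show ?thesis
    by (simp only: ulaw_tuple3 finite.emptyI finite_insert)
qed

lemma setting_chain: "setting {0, 1, 2} pa_chain {0, 1, 2} {0, 1} merge_states uniform3 cpd_chain"
  unfolding setting_def is_BN_def
  by (auto intro!: dag_if_parents_less prod_pos
      simp: pa_chain_def init_dist_def cpds_def distr_on_def uniform3_def cpd_chain_def
            kernel_chain1_def kernel_chain2_def full_support_def bn_prob_def merge_states_def)

lemma D1_chain: "D1 {0, 1, 2} pa_chain {0, 1, 2} {0, 1} merge_states uniform3 cpd_chain"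
proof -
  \<comment> \<open>The conditional laws of U under the uniform initial distribution.\<close>
  define q :: "nat \<Rightarrow> (nat \<Rightarrow> nat) \<Rightarrow> nat \<Rightarrow> real" where
    "q v yp b = (if v = 0 then (if b = 0 then 2/3 else 1/3)
       else if v = 1 then (if yp 0 = 0 then (if b = 0 then 3/4 else 1/4) else (if b = 0 then 2/3 else 1/3))
       else (if yp 1 = 0 then 1/2 else (if b = 0 then 2/3 else 1/3)))" for v yp b
  show ?thesis
    unfolding D1_def factorises_def
  proof (intro exI[of _ q] conjI ballI)
    fix v yp
    show "distr_on {0, 1} (q v yp)"
      by (simp add: q_def distr_on_def)
  next
    fix y :: "nat \<Rightarrow> nat"
    assume "y \<in> {0, 1, 2} \<rightarrow>\<^sub>E {0, 1}"
    then have "y 0 \<in> {0, 1}" "y 1 \<in> {0, 1}" "y 2 \<in> {0, 1}" by auto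
    then show "ulaw {0, 1, 2} pa_chain {0, 1, 2} merge_states uniform3 cpd_chain y =
        (\<Prod>v\<in>{0, 1, 2}. q v (restrict y (pa_chain v)) (y v))"
      unfolding ulaw_chain insert_iff singleton_iff empty_iff
      by (elim disjE; simp add: q_def pa_chain_def merge_states_def kernel_chain1_def
          kernel_chain2_def uniform3_def)
  qed
qed

lemma not_D2_chain: "\<not> D2 {0, 1, 2} pa_chain {0, 1, 2} {0, 1} merge_states cpd_chain"
proof
  define \<alpha> :: "nat \<Rightarrow> nat \<Rightarrow> real" where "\<alpha> v a = (if a = 1 then 0 else 1/2)" for v a
  let ?U = "ulaw {0, 1, 2} pa_chain {0, 1, 2} merge_states \<alpha> cpd_chain"
  assume "D2 {0, 1, 2} pa_chain {0, 1, 2} {0, 1} merge_states cpd_chain"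
  moreover have "init_dist {0, 1, 2} pa_chain {0, 1, 2} \<alpha>"
    by (simp add: init_dist_def distr_on_def \<alpha>_def)
  ultimately have "factorises {0, 1, 2} pa_chain {0, 1} ?U"
    unfolding D2_def by blast
  then have cross: "?U (tuple3 0 0 0) * ?U (tuple3 1 0 1) = ?U (tuple3 0 0 1) * ?U (tuple3 1 0 0)"
    by (rule factorises_chain_cross_ratio) simp_all
  have law_values: "?U (tuple3 0 0 0) = 7/32" "?U (tuple3 0 0 1) = 5/32"
    "?U (tuple3 1 0 1) = 1/6" "?U (tuple3 1 0 0) = 1/6"
    unfolding ulaw_chain by (simp_all add: merge_states_def kernel_chain1_def kernel_chain2_def \<alpha>_def)
  show False
    using cross unfolding law_values by simp
qed

theorem mainTheorem1:
  shows "(\<forall>(V :: 'v set) pa (A :: 'a set) (B :: 'b set) f \<alpha> P.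
            setting V pa A B f \<alpha> P \<longrightarrow>
              (D3 V pa A B f P \<longrightarrow> D2 V pa A B f P) \<and> (D2 V pa A B f P \<longrightarrow> D1 V pa A B f \<alpha> P))
       \<and> (\<exists>(V :: nat set) pa (A :: nat set) (B :: nat set) f \<alpha> P.
            setting V pa A B f \<alpha> P \<and> D1 V pa A B f \<alpha> P \<and> \<not> D2 V pa A B f P)
       \<and> (\<exists>(V :: nat set) pa (A :: nat set) (B :: nat set) f \<alpha> P.
            setting V pa A B f \<alpha> P \<and> D2 V pa A B f P \<and> \<not> D3 V pa A B f P)"
proof (intro conjI allI impI)
  fix V :: "'v set" and pa and A :: "'a set" and B :: "'b set" and f \<alpha> P
  show "D3 V pa A B f P \<Longrightarrow> D2 V pa A B f P"
    unfolding D3_def by blast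
  assume "setting V pa A B f \<alpha> P"
  then have "init_dist V pa A \<alpha>"
    unfolding setting_def is_BN_def by blast
  then show "D2 V pa A B f P \<Longrightarrow> D1 V pa A B f \<alpha> P"
    unfolding D2_def D1_def by blast
next
  show "\<exists>(V :: nat set) pa (A :: nat set) (B :: nat set) f \<alpha> P.
          setting V pa A B f \<alpha> P \<and> D1 V pa A B f \<alpha> P \<and> \<not> D2 V pa A B f P"
    using setting_chain D1_chain not_D2_chain by blast
  show "\<exists>(V :: nat set) pa (A :: nat set) (B :: nat set) f \<alpha> P.
          setting V pa A B f \<alpha> P \<and> D2 V pa A B f P \<and> \<not> D3 V pa A B f P"
    using setting_edge D2_edge not_D3_edge by blast
qed

end
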